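(* For every integer $r\ge5$, \[ f_{r-1}(r+1,r)=\rho_{r-1}\big(T(r+2,r)\big)=\frac{4r-4}{r+2}. \]
   Context: $\mathcal{G}(\Delta,\omega)$ denotes the class of finite simple graphs $G$ with maximum degree $\Delta(G)\le\Delta$ and clique number $\omega(G)\le\omega$. $k_t(G)$ is the number of copies of $K_t$ in $G$ and $\rho_t(G)=k_t(G)/|V(G)|$. $f_t(\Delta,\omega)=\sup\{\rho_t(G): G\in\mathcal{G}(\Delta,\omega),\ |V(G)|\ge 1\}$. $T(n,r)$ denotes the $r$-partite Turán graph on $n$ vertices; for $r\ge 4$, $T(r+2,r)$ has $r-2$ parts of size $1$ and two parts of size $2$. *)

theory Defs
  imports Complex_Main
begin

text \<open>Every finite
simple graph is isomorphic to one on natural-number vertices, and all quantities below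
are isomorphism invariant.\<close>

type_synonym graph = "nat set \<times> nat set set"

definition simple_graph :: "graph \<Rightarrow> bool" where
  "simple_graph G \<longleftrightarrow> finite (fst G) \<and>
     (\<forall>e\<in>snd G. e \<subseteq> fst G \<and> card e = 2)"

definition degree :: "graph \<Rightarrow> nat \<Rightarrow> nat" where
  "degree G v = card {u \<in> fst G. {u, v} \<in> snd G}"

definition max_degree :: "graph \<Rightarrow> nat" where
  "max_degree G = Max (insert 0 (degree G ` fst G))"

definition is_clique :: "graph \<Rightarrow> nat set \<Rightarrow> bool" where
  "is_clique G S \<longleftrightarrow> S \<subseteq> fst G \<and> (\<forall>u\<in>S. \<forall>v\<in>S. u \<noteq> v \<longrightarrow> {u, v} \<in> snd G)"

definition clique_number :: "graph \<Rightarrow> nat" where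
  "clique_number G = Max (card ` {S. is_clique G S})"

definition k_count :: "nat \<Rightarrow> graph \<Rightarrow> nat" where
  "k_count t G = card {S. is_clique G S \<and> card S = t}"

definition rho :: "nat \<Rightarrow> graph \<Rightarrow> real" where
  "rho t G = real (k_count t G) / real (card (fst G))"

definition graph_class :: "nat \<Rightarrow> nat \<Rightarrow> graph set" where
  "graph_class \<Delta> \<omega> = {G. simple_graph G \<and> max_degree G \<le> \<Delta> \<and> clique_number G \<le> \<omega>}"

definition f_sup :: "nat \<Rightarrow> nat \<Rightarrow> nat \<Rightarrow> real" where
  "f_sup t \<Delta> \<omega> = Sup {rho t G | G. G \<in> graph_class \<Delta> \<omega> \<and> card (fst G) \<ge> 1}"

text \<open>Turan graph T(n,r): vertices 0..n-1, vertex i in part (i mod r), edges between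
different parts (parts have sizes differing by at most one).\<close>
definition turan_graph :: "nat \<Rightarrow> nat \<Rightarrow> graph" where
  "turan_graph n r = ({0..<n}, {{u, v} | u v. u < n \<and> v < n \<and> u mod r \<noteq> v mod r})"

end

theory Submission
  imports Defs
begin

text \<open>
  Let G have maximum degree at most r + 1 and no K_(r+1), and let k(v) count the (r-1)-cliques
  through v. Double counting gives (r - 1) k_(r-1)(G) = sum of k(v), so it suffices that k(v) is
  at most 4 (r - 1)^2 / (r + 2) on average. The (r-2)-cliques inside N(v) are complements of
  sets meeting every non-edge of N(v), so small transversal counts of the non-edges bound k(v).
  A heavy vertex v, one above the average, has degree r + 1, and the non-edges of N(v) span two
  disjoint pairs or a triangle. The vertices of N(v) on no non-edge, together with v, form a block
  of vertices sharing v's closed neighbourhood. Each heavy vertex sends its excess evenly to the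
  three or four vertices spanning the non-edges; these receivers have few cliques themselves and
  get charge from a single block only, so after discharging every vertex is at most the average.
  Equality holds in T(r + 2, r), whose (r-1)-cliques are the complements of the 3-sets meeting
  both parts of size two.\<close>

section \<open>Transversals of pairs\<close>

definition transversals :: "'a set \<Rightarrow> nat \<Rightarrow> ('a \<times> 'a) set \<Rightarrow> 'a set set" where
  "transversals W k P = {T. T \<subseteq> W \<and> card T = k \<and> (\<forall>(p, q)\<in>P. p \<in> T \<or> q \<in> T)}"

definition triples_through :: "'a set \<Rightarrow> 'a \<Rightarrow> 'a \<Rightarrow> 'a set \<Rightarrow> 'a set set" where
  "triples_through W x y X = {T. T \<subseteq> W \<and> card T = 3 \<and> x \<in> T \<and> y \<in> T \<and> T \<inter> X = {}}"

lemma finite_transversals: "finite W \<Longrightarrow> finite (transversals W k P)"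
  unfolding transversals_def by (rule finite_subset[of _ "Pow W"]) auto

lemma finite_triples_through: "finite W \<Longrightarrow> finite (triples_through W x y X)"
  unfolding triples_through_def by (rule finite_subset[of _ "Pow W"]) auto

lemma transversals_antimono: "P' \<subseteq> P \<Longrightarrow> transversals W k P \<subseteq> transversals W k P'"
  unfolding transversals_def by blast

lemma card_3_eq_insert:
  assumes "card T = 3" "x \<in> T" "y \<in> T" "z \<in> T" "x \<noteq> y" "y \<noteq> z" "x \<noteq> z"
  shows "T = {x, y, z}"
proof (rule card_subset_eq[symmetric])
  show "finite T"
    using assms(1) card.infinite by fastforce
qed (use assms in auto)

lemma three_distinct_elements:
  assumes "3 \<le> card A"
  obtains x y z where "x \<in> A" "y \<in> A" "z \<in> A" "x \<noteq> y" "y \<noteq> z" "x \<noteq> z"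
proof -
  obtain T where "T \<subseteq> A" "card T = 3"
    using obtain_subset_with_card_n[OF assms] by blast
  then show ?thesis
    using that unfolding card_3_iff by blast
qed

lemma triples_containing_three:
  assumes "x \<noteq> y" "y \<noteq> z" "x \<noteq> z"
  shows "{T. card T = 3 \<and> x \<in> T \<and> y \<in> T \<and> z \<in> T} = {{x, y, z}}"
  using assms card_3_eq_insert[of _ x y z] by (auto simp: card_3_iff)

lemma triples_through_eq_image:
  assumes "x \<in> W" "y \<in> W" "x \<noteq> y" "x \<notin> X" "y \<notin> X"
  shows "triples_through W x y X = (\<lambda>z. {x, y, z}) ` (W - ({x, y} \<union> X))"
proof
  show "triples_through W x y X \<subseteq> (\<lambda>z. {x, y, z}) ` (W - ({x, y} \<union> X))"
  proof
    fix T assume "T \<in> triples_through W x y X"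
    then have T: "T \<subseteq> W" "card T = 3" "x \<in> T" "y \<in> T" "T \<inter> X = {}"
      unfolding triples_through_def by auto
    then obtain z where "z \<in> T - {x, y}"
      using assms(3) by (auto simp: card_3_iff)
    with T assms(3) show "T \<in> (\<lambda>z. {x, y, z}) ` (W - ({x, y} \<union> X))"
      using card_3_eq_insert[of T x y z] by auto
  qed
  show "(\<lambda>z. {x, y, z}) ` (W - ({x, y} \<union> X)) \<subseteq> triples_through W x y X"
    using assms unfolding triples_through_def by auto
qed

lemma card_triples_through:
  assumes "finite W" "x \<in> W" "y \<in> W" "x \<noteq> y" "X \<subseteq> W" "x \<notin> X" "y \<notin> X"
  shows "card (triples_through W x y X) = card W - 2 - card X"
proof -
  have "inj_on (\<lambda>z. {x, y, z}) (W - ({x, y} \<union> X))"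
    by (rule inj_onI) auto
  then have "card (triples_through W x y X) = card (W - ({x, y} \<union> X))"
    using triples_through_eq_image[OF assms(2-4,6,7)] by (simp add: card_image)
  also have "\<dots> = card W - card ({x, y} \<union> X)"
    using assms by (intro card_Diff_subset) (auto intro: finite_subset)
  also have "card ({x, y} \<union> X) = 2 + card X"
    using assms finite_subset[OF assms(5,1)] by simp
  finally show ?thesis by simp
qed

lemma card_transversals_two_disjoint_pairs:
  assumes W: "finite W" "a \<in> W" "b \<in> W" "c \<in> W" "d \<in> W"
    and distinct: "a \<noteq> b" "a \<noteq> c" "a \<noteq> d" "b \<noteq> c" "b \<noteq> d" "c \<noteq> d"
  shows "card (transversals W 3 {(a, b), (c, d)}) = 4 * card W - 12"
proof -
  \<comment> \<open>split by the first of a, b and the first of c, d that T contains\<close>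
  let ?B1 = "triples_through W a c {}" and ?B2 = "triples_through W a d {c}"
  let ?B3 = "triples_through W b c {a}" and ?B4 = "triples_through W b d {a, c}"
  have split: "transversals W 3 {(a, b), (c, d)} = ?B1 \<union> ?B2 \<union> ?B3 \<union> ?B4"
    unfolding transversals_def triples_through_def by blast
  have "?B1 \<inter> ?B2 = {}" "(?B1 \<union> ?B2) \<inter> ?B3 = {}" "(?B1 \<union> ?B2 \<union> ?B3) \<inter> ?B4 = {}"
    unfolding triples_through_def by blast+
  then have "card (?B1 \<union> ?B2 \<union> ?B3 \<union> ?B4) = card ?B1 + card ?B2 + card ?B3 + card ?B4"
    using W(1) by (simp add: card_Un_disjoint finite_triples_through)
  moreover have "card ?B1 + card ?B2 + card ?B3 + card ?B4
      = (card W - 2) + (card W - 3) + (card W - 3) + (card W - 4)"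
    using W distinct by (simp add: card_triples_through)
  moreover have "card {a, b, c, d} \<le> card W"
    using W by (intro card_mono) auto
  ultimately show ?thesis
    using split distinct by simp
qed

lemma card_transversals_triangle:
  assumes W: "finite W" "a \<in> W" "b \<in> W" "c \<in> W" and distinct: "a \<noteq> b" "a \<noteq> c" "b \<noteq> c"
  shows "card (transversals W 3 {(a, b), (b, c), (a, c)}) \<le> 3 * card W - 8"
proof -
  let ?B1 = "triples_through W a b {}" and ?B2 = "triples_through W a c {b}"
  let ?B3 = "triples_through W b c {a}"
  have "card (transversals W 3 {(a, b), (b, c), (a, c)}) \<le> card (?B1 \<union> ?B2 \<union> ?B3)"
    using W(1) unfolding transversals_def triples_through_def
    by (intro card_mono) (auto intro: finite_subset[of _ "Pow W"])
  also have "\<dots> \<le> card ?B1 + card ?B2 + card ?B3"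
    using card_Un_le[of "?B1 \<union> ?B2" ?B3] card_Un_le[of ?B1 ?B2] by linarith
  also have "\<dots> = (card W - 2) + (card W - 3) + (card W - 3)"
    using W distinct by (simp add: card_triples_through)
  also have "\<dots> = 3 * card W - 8"
    using card_mono[of W "{a, b, c}"] W distinct by simp
  finally show ?thesis .
qed

lemma card_transversals_path:
  assumes W: "finite W" "a \<in> W" "b \<in> W" "c \<in> W" "d \<in> W"
    and distinct: "a \<noteq> b" "a \<noteq> c" "a \<noteq> d" "b \<noteq> c" "b \<noteq> d" "c \<noteq> d"
  shows "card (transversals W 3 {(a, b), (b, c), (c, d)}) \<le> 3 * card W - 8"
proof -
  let ?B1 = "triples_through W b c {}" and ?B2 = "triples_through W b d {c}"
  let ?B3 = "triples_through W a c {b}"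
  have "card (transversals W 3 {(a, b), (b, c), (c, d)}) \<le> card (?B1 \<union> ?B2 \<union> ?B3)"
    using W(1) unfolding transversals_def triples_through_def
    by (intro card_mono) (auto intro: finite_subset[of _ "Pow W"])
  also have "\<dots> \<le> card ?B1 + card ?B2 + card ?B3"
    using card_Un_le[of "?B1 \<union> ?B2" ?B3] card_Un_le[of ?B1 ?B2] by linarith
  also have "\<dots> = (card W - 2) + (card W - 3) + (card W - 3)"
    using W distinct by (simp add: card_triples_through)
  also have "\<dots> = 3 * card W - 8"
    using card_mono[of W "{a, b, c}"] W distinct by simp
  finally show ?thesis .
qed

lemma card_transversals_cherry_and_pair:
  assumes W: "finite W" "a \<in> W" "b \<in> W" "c \<in> W" "d \<in> W" "e \<in> W"
    and distinct: "a \<noteq> b" "a \<noteq> c" "a \<noteq> d" "a \<noteq> e" "b \<noteq> c" "b \<noteq> d" "b \<noteq> e"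
      "c \<noteq> d" "c \<noteq> e" "d \<noteq> e"
  shows "card (transversals W 3 {(a, b), (a, e), (c, d)}) \<le> 2 * card W - 3"
proof -
  let ?B1 = "triples_through W a c {}" and ?B2 = "triples_through W a d {c}"
  have "transversals W 3 {(a, b), (a, e), (c, d)}
      \<subseteq> ?B1 \<union> ?B2 \<union> {T. card T = 3 \<and> b \<in> T \<and> e \<in> T \<and> c \<in> T}
        \<union> {T. card T = 3 \<and> b \<in> T \<and> e \<in> T \<and> d \<in> T}"
    unfolding transversals_def triples_through_def by blast
  then have "card (transversals W 3 {(a, b), (a, e), (c, d)}) \<le> card (?B1 \<union> ?B2 \<union> {{b, e, c}} \<union> {{b, e, d}})"
    using W(1) distinct
    by (intro card_mono) (simp_all add: finite_triples_through triples_containing_three)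
  also have "\<dots> \<le> card ?B1 + card ?B2 + 1 + 1"
    using card_Un_le[of "?B1 \<union> ?B2 \<union> {{b, e, c}}" "{{b, e, d}}"]
      card_Un_le[of "?B1 \<union> ?B2" "{{b, e, c}}"] card_Un_le[of ?B1 ?B2] by simp
  also have "\<dots> = (card W - 2) + (card W - 3) + 1 + 1"
    using W distinct by (simp add: card_triples_through)
  also have "\<dots> = 2 * card W - 3"
    using card_mono[of W "{a, c, d}"] W distinct by simp
  finally show ?thesis .
qed

lemma card_transversals_three_disjoint_pairs:
  assumes "a \<noteq> c" "a \<noteq> d" "a \<noteq> e" "a \<noteq> f" "b \<noteq> c" "b \<noteq> d" "b \<noteq> e" "b \<noteq> f"
    "c \<noteq> e" "c \<noteq> f" "d \<noteq> e" "d \<noteq> f"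
  shows "card (transversals W 3 {(a, b), (c, d), (e, f)}) \<le> 8"
proof -
  let ?choose = "\<lambda>(x, y, z). {x, y, z}"
  have "transversals W 3 {(a, b), (c, d), (e, f)} \<subseteq> ?choose ` ({a, b} \<times> {c, d} \<times> {e, f})"
  proof
    fix T assume "T \<in> transversals W 3 {(a, b), (c, d), (e, f)}"
    then obtain x y z where xyz: "x \<in> {a, b}" "y \<in> {c, d}" "z \<in> {e, f}" "x \<in> T" "y \<in> T" "z \<in> T"
      and "card T = 3"
      unfolding transversals_def by auto
    then have "T = {x, y, z}"
      using assms by (intro card_3_eq_insert) auto
    with xyz(1-3) show "T \<in> ?choose ` ({a, b} \<times> {c, d} \<times> {e, f})"
      by (intro image_eqI[of _ _ "(x, y, z)"]) auto
  qed
  then have "card (transversals W 3 {(a, b), (c, d), (e, f)}) \<le> card (?choose ` ({a, b} \<times> {c, d} \<times> {e, f}))"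
    by (intro card_mono) auto
  also have "\<dots> \<le> card ({a, b} \<times> {c, d} \<times> {e, f})"
    by (rule card_image_le) auto
  also have "\<dots> \<le> 2 * (2 * 2)"
    unfolding card_cartesian_product by (intro mult_le_mono) (simp_all add: card_insert_if)
  finally show ?thesis by simp
qed

lemma card_transversals_claw_and_pair:
  assumes W: "finite W" "x \<in> W" "p \<in> W" "q \<in> W"
    and distinct: "p \<noteq> q" "p \<noteq> x" "q \<noteq> x" "y1 \<noteq> y2" "y1 \<noteq> y3" "y2 \<noteq> y3"
  shows "card (transversals W 3 {(x, y1), (x, y2), (x, y3), (p, q)}) \<le> 2 * card W - 4"
    and "{p, q} \<inter> {y1, y2, y3} = {} \<Longrightarrow>
      card (transversals W 3 {(x, y1), (x, y2), (x, y3), (p, q)}) \<le> 2 * card W - 5"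
proof -
  let ?B1 = "triples_through W x p {}" and ?B2 = "triples_through W x q {p}"
  let ?C = "{T. card T = 3 \<and> y1 \<in> T \<and> y2 \<in> T \<and> y3 \<in> T \<and> (p \<in> T \<or> q \<in> T)}"
  have C: "?C \<subseteq> {{y1, y2, y3}}" "{p, q} \<inter> {y1, y2, y3} = {} \<Longrightarrow> ?C = {}"
    using triples_containing_three[OF distinct(4,6,5)] by blast+
  have "transversals W 3 {(x, y1), (x, y2), (x, y3), (p, q)} \<subseteq> ?B1 \<union> ?B2 \<union> ?C"
    unfolding transversals_def triples_through_def by blast
  then have "card (transversals W 3 {(x, y1), (x, y2), (x, y3), (p, q)}) \<le> card (?B1 \<union> ?B2 \<union> ?C)"
    using W(1) C(1) by (intro card_mono) (auto intro: finite_triples_through finite_subset)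
  also have "\<dots> \<le> card ?B1 + card ?B2 + card ?C"
    using card_Un_le[of "?B1 \<union> ?B2" ?C] card_Un_le[of ?B1 ?B2] by linarith
  also have "card ?B1 + card ?B2 = (card W - 2) + (card W - 3)"
    using W distinct by (simp add: card_triples_through)
  finally have bound: "card (transversals W 3 {(x, y1), (x, y2), (x, y3), (p, q)})
      \<le> (card W - 2) + (card W - 3) + card ?C" .
  have W3: "3 \<le> card W"
    using card_mono[of W "{x, p, q}"] W distinct by simp
  have "card ?C \<le> 1"
    using card_mono[OF _ C(1)] by simp
  with bound W3 show "card (transversals W 3 {(x, y1), (x, y2), (x, y3), (p, q)}) \<le> 2 * card W - 4"
    by linarith
  assume "{p, q} \<inter> {y1, y2, y3} = {}"
  with bound W3 C(2) show "card (transversals W 3 {(x, y1), (x, y2), (x, y3), (p, q)}) \<le> 2 * card W - 5"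
    by simp
qed

lemma card_transversals_pair_2:
  assumes "finite W" "p \<in> W" "q \<in> W" "p \<noteq> q"
  shows "card (transversals W 2 {(p, q)}) \<le> 2 * card W - 3"
proof -
  have "transversals W 2 {(p, q)} \<subseteq> (\<lambda>z. {p, z}) ` (W - {p}) \<union> (\<lambda>z. {q, z}) ` (W - {p, q})"
  proof
    fix T assume T: "T \<in> transversals W 2 {(p, q)}"
    then obtain u w where uw: "T = {u, w}" "u \<noteq> w"
      unfolding transversals_def by (auto simp: card_2_iff)
    from T have "T \<subseteq> W" "p \<in> T \<or> q \<in> T"
      unfolding transversals_def by auto
    with uw show "T \<in> (\<lambda>z. {p, z}) ` (W - {p}) \<union> (\<lambda>z. {q, z}) ` (W - {p, q})"
      by (cases "u = p \<or> w = p") (auto simp: insert_commute)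
  qed
  then have "card (transversals W 2 {(p, q)})
      \<le> card ((\<lambda>z. {p, z}) ` (W - {p}) \<union> (\<lambda>z. {q, z}) ` (W - {p, q}))"
    using assms(1) by (intro card_mono) auto
  also have "\<dots> \<le> card ((\<lambda>z. {p, z}) ` (W - {p})) + card ((\<lambda>z. {q, z}) ` (W - {p, q}))"
    by (rule card_Un_le)
  also have "\<dots> \<le> card (W - {p}) + card (W - {p, q})"
    by (intro add_mono card_image_le) (use assms(1) in auto)
  also have "\<dots> = 2 * card W - 3"
    using assms by (simp add: card_Diff_subset)
  finally show ?thesis .
qed

section \<open>Discharging and double counting\<close>

lemma discharging:
  fixes f :: "'a \<Rightarrow> real" and R :: "'a \<Rightarrow> 'a set"
  assumes V: "finite V"
    and recipients: "\<And>v. v \<in> V \<Longrightarrow> H v \<Longrightarrow> R v \<subseteq> V \<and> R v \<noteq> {}"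
    and no_heavy_recipient: "\<And>u v. v \<in> V \<Longrightarrow> H v \<Longrightarrow> u \<in> R v \<Longrightarrow> \<not> H u"
    and light: "\<And>u. u \<in> V \<Longrightarrow> \<not> H u \<Longrightarrow>
      f u + (\<Sum>v\<in>{v\<in>V. H v \<and> u \<in> R v}. (f v - c) / card (R v)) \<le> c"
  shows "(\<Sum>v\<in>V. f v) \<le> c * card V"
proof -
  let ?H = "{v\<in>V. H v}" and ?L = "{v\<in>V. \<not> H v}"
  let ?share = "\<lambda>v. (f v - c) / card (R v)"
  have "(\<Sum>v\<in>?H. f v - c) = (\<Sum>v\<in>?H. \<Sum>u\<in>{u\<in>V. u \<in> R v}. ?share v)"
  proof (rule sum.cong[OF refl])
    fix v assume v: "v \<in> ?H"
    then have "R v \<subseteq> V" "R v \<noteq> {}"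
      using recipients by auto
    then have "{u\<in>V. u \<in> R v} = R v" "card (R v) \<noteq> 0"
      using finite_subset[OF _ V] by auto
    then show "f v - c = (\<Sum>u\<in>{u\<in>V. u \<in> R v}. ?share v)"
      by simp
  qed
  also have "\<dots> = (\<Sum>u\<in>V. \<Sum>v\<in>{v\<in>?H. u \<in> R v}. ?share v)"
    using V by (intro sum.swap_restrict) auto
  also have "\<dots> = (\<Sum>u\<in>?L. \<Sum>v\<in>{v\<in>?H. u \<in> R v}. ?share v)"
  proof (rule sum.mono_neutral_right)
    show "\<forall>u\<in>V - ?L. (\<Sum>v\<in>{v\<in>?H. u \<in> R v}. ?share v) = 0"
    proof
      fix u assume "u \<in> V - ?L"
      then have "{v\<in>?H. u \<in> R v} = {}"
        using no_heavy_recipient by blast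
      then show "(\<Sum>v\<in>{v\<in>?H. u \<in> R v}. ?share v) = 0"
        by (simp only: sum.empty)
    qed
  qed (use V in auto)
  also have "\<dots> \<le> (\<Sum>u\<in>?L. c - f u)"
    using light by (intro sum_mono) (simp add: algebra_simps)
  finally have "(\<Sum>v\<in>?H. f v - c) + (\<Sum>v\<in>?L. f v - c) \<le> 0"
    by (simp add: sum_subtractf)
  moreover have "(\<Sum>v\<in>V. f v - c) = (\<Sum>v\<in>?H. f v - c) + (\<Sum>v\<in>?L. f v - c)"
    using V by (subst sum.union_disjoint[symmetric]) (auto intro: sum.cong)
  ultimately show ?thesis
    by (simp add: sum_subtractf mult.commute)
qed

lemma sum_card_members:
  assumes "finite V" "\<And>Q. Q \<in> F \<Longrightarrow> Q \<subseteq> V \<and> card Q = k"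
  shows "(\<Sum>v\<in>V. card {Q\<in>F. v \<in> Q}) = k * card F"
proof -
  have F: "finite F"
    using assms by (intro finite_subset[of F "Pow V"]) auto
  have "(\<Sum>v\<in>V. card {Q\<in>F. v \<in> Q}) = (\<Sum>v\<in>V. \<Sum>Q\<in>F. if v \<in> Q then 1 else 0)"
    using F by (simp add: sum.If_cases Int_def)
  also have "\<dots> = (\<Sum>Q\<in>F. \<Sum>v\<in>V. if v \<in> Q then 1 else 0)"
    by (rule sum.swap)
  also have "\<dots> = (\<Sum>Q\<in>F. k)"
    using assms by (intro sum.cong refl) (simp add: sum.If_cases Int_absorb1)
  finally show ?thesis
    by simp
qed

section \<open>Graphs with maximum degree r + 1 and clique number r\<close>

lemma finite_cliques: "finite (fst G) \<Longrightarrow> finite {S. is_clique G S \<and> P S}"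
  unfolding is_clique_def by (rule finite_subset[of _ "Pow (fst G)"]) auto

lemma graph_classD:
  assumes "G \<in> graph_class \<Delta> \<omega>"
  shows "finite (fst G)"
    and "e \<in> snd G \<Longrightarrow> e \<subseteq> fst G \<and> card e = 2"
    and "v \<in> fst G \<Longrightarrow> degree G v \<le> \<Delta>"
    and "is_clique G S \<Longrightarrow> card S \<le> \<omega>"
proof -
  have G: "simple_graph G" "max_degree G \<le> \<Delta>" "clique_number G \<le> \<omega>"
    using assms unfolding graph_class_def by auto
  then show fin: "finite (fst G)" and "e \<in> snd G \<Longrightarrow> e \<subseteq> fst G \<and> card e = 2"
    unfolding simple_graph_def by auto
  show "degree G v \<le> \<Delta>" if "v \<in> fst G"
  proof -
    have "degree G v \<le> Max (insert 0 (degree G ` fst G))"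
      using fin that by (intro Max_ge) auto
    with G(2) show ?thesis
      unfolding max_degree_def by simp
  qed
  show "card S \<le> \<omega>" if "is_clique G S"
  proof -
    have "card S \<le> Max (card ` {S. is_clique G S})"
      using that finite_cliques[OF fin, of "\<lambda>_. True"] by (intro Max_ge) auto
    with G(3) show ?thesis
      unfolding clique_number_def by simp
  qed
qed

locale extremal_graph =
  fixes G :: graph and r :: nat
  assumes in_class: "G \<in> graph_class (r + 1) r"
    and r_ge_5: "5 \<le> r"
begin

abbreviation V :: "nat set" where "V \<equiv> fst G"
abbreviation adj :: "nat \<Rightarrow> nat \<Rightarrow> bool" where "adj u w \<equiv> {u, w} \<in> snd G"

definition nbhd :: "nat \<Rightarrow> nat set" where "nbhd v = {u \<in> V. adj u v}"

definition cliques_at :: "nat \<Rightarrow> nat" where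
  "cliques_at v = card {Q. is_clique G Q \<and> card Q = r - 1 \<and> v \<in> Q}"

definition missing :: "nat \<Rightarrow> nat \<Rightarrow> nat \<Rightarrow> bool" where
  "missing v p q \<longleftrightarrow> p \<in> nbhd v \<and> q \<in> nbhd v \<and> p \<noteq> q \<and> \<not> adj p q"

lemma finite_V: "finite V"
  using graph_classD(1)[OF in_class] .

lemma adj_sym: "adj u w \<longleftrightarrow> adj w u"
  by (simp add: insert_commute)

lemma adj_in_V: "adj u w \<Longrightarrow> u \<in> V \<and> w \<in> V"
  using graph_classD(2)[OF in_class] by blast

lemma adj_irrefl: "adj u w \<Longrightarrow> u \<noteq> w"
  using graph_classD(2)[OF in_class] by fastforce

lemma in_nbhd_iff: "u \<in> nbhd v \<longleftrightarrow> adj u v"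
  unfolding nbhd_def using adj_in_V by auto

lemma nbhd_subset_V: "nbhd v \<subseteq> V"
  unfolding nbhd_def by auto

lemma finite_nbhd: "finite (nbhd v)"
  using finite_subset[OF nbhd_subset_V finite_V] .

lemma not_in_nbhd: "v \<notin> nbhd v"
  using adj_irrefl in_nbhd_iff by blast

lemma card_nbhd_le: "card (nbhd v) \<le> r + 1"
proof (cases "v \<in> V")
  case True
  then show ?thesis
    using graph_classD(3)[OF in_class] unfolding degree_def nbhd_def by blast
next
  case False
  then have "nbhd v = {}"
    using adj_in_V in_nbhd_iff by blast
  then show ?thesis by simp
qed

lemma missing_sym: "missing v p q \<Longrightarrow> missing v q p"
  unfolding missing_def using adj_sym by blast

lemma missing_if_large:
  assumes "A \<subseteq> nbhd v" "r \<le> card A"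
  obtains p q where "p \<in> A" "q \<in> A" "missing v p q"
proof -
  have not_clique: "\<not> is_clique G (insert v A)"
  proof
    assume "is_clique G (insert v A)"
    then have "card (insert v A) \<le> r"
      using graph_classD(4)[OF in_class] by blast
    moreover have "finite A" "v \<notin> A"
      using assms(1) finite_nbhd finite_subset not_in_nbhd by blast+
    ultimately show False
      using assms(2) by simp
  qed
  have "A \<noteq> {}"
    using assms(2) r_ge_5 by auto
  then have "insert v A \<subseteq> V" and "\<forall>u\<in>A. adj u v"
    using assms(1) nbhd_subset_V in_nbhd_iff adj_in_V by blast+
  with not_clique obtain p q where "p \<in> A" "q \<in> A" "p \<noteq> q" "\<not> adj p q"
    unfolding is_clique_def using adj_sym by blast
  then show ?thesis
    using that assms(1) unfolding missing_def by blast
qed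

lemma cliques_at_le_cliques_in_nbhd:
  "cliques_at v \<le> card {S. S \<subseteq> nbhd v \<and> is_clique G S \<and> card S = r - 2}"
proof -
  let ?Q = "{Q. is_clique G Q \<and> card Q = r - 1 \<and> v \<in> Q}"
  let ?S = "{S. S \<subseteq> nbhd v \<and> is_clique G S \<and> card S = r - 2}"
  have "inj_on (\<lambda>Q. Q - {v}) ?Q"
    by (rule inj_onI) (metis insert_Diff mem_Collect_eq)
  then have "cliques_at v = card ((\<lambda>Q. Q - {v}) ` ?Q)"
    unfolding cliques_at_def by (simp add: card_image)
  also have "\<dots> \<le> card ?S"
  proof (rule card_mono)
    show "finite ?S"
      using finite_cliques[OF finite_V] by simp
    show "(\<lambda>Q. Q - {v}) ` ?Q \<subseteq> ?S"
      unfolding is_clique_def nbhd_def by (auto simp: card_Diff_singleton_if)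
  qed
  finally show ?thesis .
qed

text \<open>The complement in nbhd v of an (r-2)-clique inside nbhd v meets every missing edge.\<close>
lemma cliques_at_le_transversals:
  "cliques_at v \<le> card (transversals (nbhd v) (card (nbhd v) - (r - 2)) {(p, q). missing v p q})"
proof -
  let ?S = "{S. S \<subseteq> nbhd v \<and> is_clique G S \<and> card S = r - 2}"
  let ?T = "transversals (nbhd v) (card (nbhd v) - (r - 2)) {(p, q). missing v p q}"
  have "inj_on (\<lambda>S. nbhd v - S) ?S"
    by (rule inj_onI) (metis (no_types, lifting) Diff_Diff_Int inf.absorb_iff2 mem_Collect_eq)
  then have "card ?S = card ((\<lambda>S. nbhd v - S) ` ?S)"
    by (simp add: card_image)
  also have "\<dots> \<le> card ?T"
  proof (rule card_mono)
    show "finite ?T"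
      using finite_nbhd by (rule finite_transversals)
    show "(\<lambda>S. nbhd v - S) ` ?S \<subseteq> ?T"
      unfolding transversals_def missing_def is_clique_def
      using finite_nbhd by (auto simp: card_Diff_subset finite_subset)
  qed
  finally show ?thesis
    using cliques_at_le_cliques_in_nbhd le_trans by blast
qed

lemma cliques_at_le_transversals_3:
  assumes "card (nbhd v) = r + 1" and "\<And>p q. (p, q) \<in> P \<Longrightarrow> missing v p q"
  shows "cliques_at v \<le> card (transversals (nbhd v) 3 P)"
proof -
  have "card (nbhd v) - (r - 2) = 3"
    using assms(1) r_ge_5 by simp
  then have "cliques_at v \<le> card (transversals (nbhd v) 3 {(p, q). missing v p q})"
    using cliques_at_le_transversals by metis
  also have "\<dots> \<le> card (transversals (nbhd v) 3 P)"
    using assms(2) by (intro card_mono finite_transversals finite_nbhd transversals_antimono) auto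
  finally show ?thesis .
qed

lemma cliques_at_le_if_card_nbhd_le:
  assumes "card (nbhd v) \<le> r"
  shows "cliques_at v \<le> 2 * r - 3"
proof (cases "card (nbhd v) = r")
  case True
  obtain p q where pq: "p \<in> nbhd v" "q \<in> nbhd v" "missing v p q"
    using missing_if_large[of "nbhd v" v] True by auto
  have "card (nbhd v) - (r - 2) = 2"
    using True r_ge_5 by simp
  then have "cliques_at v \<le> card (transversals (nbhd v) 2 {(p, q). missing v p q})"
    using cliques_at_le_transversals by metis
  also have "\<dots> \<le> card (transversals (nbhd v) 2 {(p, q)})"
    using pq by (intro card_mono finite_transversals finite_nbhd transversals_antimono) auto
  also have "\<dots> \<le> 2 * r - 3"
    using card_transversals_pair_2[OF finite_nbhd pq(1,2)] pq(3) True
    unfolding missing_def by simp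
  finally show ?thesis .
next
  case False
  have "cliques_at v \<le> card {S. S \<subseteq> nbhd v \<and> card S = r - 2}"
    using cliques_at_le_cliques_in_nbhd
    by (rule le_trans) (auto intro!: card_mono simp: finite_nbhd)
  also have "\<dots> = card (nbhd v) choose (r - 2)"
    using finite_nbhd by (rule n_subsets)
  also have "\<dots> \<le> Suc (r - 2) choose (r - 2)"
    using False assms r_ge_5 by (intro binomial_right_mono) simp
  also have "\<dots> = r - 1"
    using r_ge_5 by (simp add: binomial_Suc_n)
  finally show ?thesis
    using r_ge_5 by simp
qed

definition target :: real where "target = 4 * (real r - 1)\<^sup>2 / (real r + 2)"

definition heavy :: "nat \<Rightarrow> bool" where "heavy v \<longleftrightarrow> target < real (cliques_at v)"

lemma not_heavy_if_cliques_at_le: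
  assumes "cliques_at v \<le> 2 * r - 1"
  shows "\<not> heavy v"
proof -
  have r: "5 \<le> real r"
    using r_ge_5 by simp
  have "(2 * real r - 1) * (real r + 2) \<le> 4 * (real r - 1)\<^sup>2"
    using mult_right_mono[of 0 "real r - 5" "2 * real r - 1"] r
    by (simp add: power2_eq_square algebra_simps)
  then have "2 * real r - 1 \<le> target"
    unfolding target_def using r by (simp add: field_simps)
  moreover have "real (cliques_at v) \<le> 2 * real r - 1"
    using assms r_ge_5 by linarith
  ultimately show ?thesis
    unfolding heavy_def by linarith
qed

lemma heavy_card_nbhd:
  assumes "heavy v"
  shows "card (nbhd v) = r + 1"
proof (rule ccontr)
  assume "card (nbhd v) \<noteq> r + 1"
  then have "cliques_at v \<le> 2 * r - 3"
    using card_nbhd_le[of v] by (intro cliques_at_le_if_card_nbhd_le) simp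
  with assms show False
    using not_heavy_if_cliques_at_le by simp
qed

lemma cliques_at_le_claw_and_pair:
  assumes deg: "card (nbhd u) = r + 1"
    and claw: "missing u x y1" "missing u x y2" "missing u x y3" "y1 \<noteq> y2" "y1 \<noteq> y3" "y2 \<noteq> y3"
    and pair: "missing u p q" "p \<noteq> x" "q \<noteq> x"
  shows "cliques_at u \<le> 2 * r - 2"
    and "{p, q} \<inter> {y1, y2, y3} = {} \<Longrightarrow> cliques_at u \<le> 2 * r - 3"
proof -
  let ?T = "transversals (nbhd u) 3 {(x, y1), (x, y2), (x, y3), (p, q)}"
  have le: "cliques_at u \<le> card ?T"
    using deg claw pair by (intro cliques_at_le_transversals_3) auto
  have "x \<in> nbhd u" "p \<in> nbhd u" "q \<in> nbhd u" "p \<noteq> q"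
    using claw pair unfolding missing_def by auto
  note bounds = card_transversals_claw_and_pair[OF finite_nbhd this pair(2,3) claw(4-6)]
  show "cliques_at u \<le> 2 * r - 2"
    using order.trans[OF le bounds(1)] deg by simp
  show "cliques_at u \<le> 2 * r - 3" if "{p, q} \<inter> {y1, y2, y3} = {}"
    using order.trans[OF le bounds(2)[OF that]] deg by simp
qed

lemma cliques_at_le_if_claw:
  assumes deg: "card (nbhd u) = r + 1"
    and claw: "missing u x y1" "missing u x y2" "missing u x y3" "y1 \<noteq> y2" "y1 \<noteq> y3" "y2 \<noteq> y3"
  shows "cliques_at u \<le> 2 * r - 2"
proof -
  have "r \<le> card (nbhd u - {x})"
    using deg finite_nbhd by (simp add: card_Diff_singleton_if)
  then obtain p q where "p \<in> nbhd u - {x}" "q \<in> nbhd u - {x}" "missing u p q"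
    by (meson Diff_subset missing_if_large)
  then show ?thesis
    using cliques_at_le_claw_and_pair(1)[OF deg claw] by blast
qed

lemma heavy_card_missing_le_2:
  assumes "heavy v"
  shows "card {y. missing v x y} \<le> 2"
proof (rule ccontr)
  assume "\<not> ?thesis"
  then have "3 \<le> card {y. missing v x y}"
    by simp
  then obtain y1 y2 y3 where "y1 \<in> {y. missing v x y}" "y2 \<in> {y. missing v x y}"
    "y3 \<in> {y. missing v x y}" "y1 \<noteq> y2" "y2 \<noteq> y3" "y1 \<noteq> y3"
    by (rule three_distinct_elements)
  then have "cliques_at v \<le> 2 * r - 2"
    using cliques_at_le_if_claw[OF heavy_card_nbhd[OF assms], of x y1 y2 y3] by simp
  then show False
    using assms not_heavy_if_cliques_at_le by simp
qed

lemma heavy_no_three_disjoint_missing: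
  assumes "heavy v" "missing v a b" "missing v c d" "missing v e f"
    and "{a, b} \<inter> {c, d} = {}" "{a, b} \<inter> {e, f} = {}" "{c, d} \<inter> {e, f} = {}"
  shows False
proof -
  have "cliques_at v \<le> card (transversals (nbhd v) 3 {(a, b), (c, d), (e, f)})"
    using heavy_card_nbhd[OF assms(1)] assms(2-4) by (intro cliques_at_le_transversals_3) auto
  also have "\<dots> \<le> 8"
    using assms(5-7) by (intro card_transversals_three_disjoint_pairs) auto
  finally show False
    using assms(1) not_heavy_if_cliques_at_le[of v] r_ge_5 by simp
qed

lemma heavy_no_cherry_and_disjoint_missing:
  assumes "heavy v" "missing v a b" "missing v a e" "missing v c d"
    and "b \<noteq> e" "{a, b, e} \<inter> {c, d} = {}"
  shows False
proof -
  have deg: "card (nbhd v) = r + 1"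
    using heavy_card_nbhd[OF assms(1)] .
  have "cliques_at v \<le> card (transversals (nbhd v) 3 {(a, b), (a, e), (c, d)})"
    using deg assms(2-4) by (intro cliques_at_le_transversals_3) auto
  also have "\<dots> \<le> 2 * card (nbhd v) - 3"
    using assms(2-6) unfolding missing_def
    by (intro card_transversals_cherry_and_pair finite_nbhd) auto
  finally show False
    using assms(1) not_heavy_if_cliques_at_le[of v] deg by simp
qed

definition nonedge_vertices :: "nat \<Rightarrow> nat set" where
  "nonedge_vertices v = {p. \<exists>q. missing v p q}"

text \<open>
  A missing edge at a vertex outside {a, b, c, d} would be disjoint from both pairs or, together
  with one of them, form a cherry next to a disjoint pair.\<close>
lemma nonedge_vertices_eq_if_disjoint_missing:
  assumes "heavy v" "missing v a b" "missing v c d" "{a, b} \<inter> {c, d} = {}"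
  shows "nonedge_vertices v = {a, b, c, d}"
proof
  show "{a, b, c, d} \<subseteq> nonedge_vertices v"
    using assms(2,3) missing_sym unfolding nonedge_vertices_def by blast
  show "nonedge_vertices v \<subseteq> {a, b, c, d}"
  proof
    fix u assume "u \<in> nonedge_vertices v"
    then obtain w where uw: "missing v u w"
      unfolding nonedge_vertices_def by blast
    have cherry: "False" if "missing v x y" "missing v s t" "{x, y} \<inter> {s, t} = {}" "w = x"
      "u \<notin> {x, y, s, t}" for x y s t
      using heavy_no_cherry_and_disjoint_missing[OF assms(1) that(1) _ that(2)] missing_sym[OF uw]
        that(3-5) by auto
    show "u \<in> {a, b, c, d}"
    proof (rule ccontr)
      assume u: "u \<notin> {a, b, c, d}"
      have "w \<in> {a, b, c, d}"
        using heavy_no_three_disjoint_missing[OF assms(1-3) uw] assms(4) u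
          missing_def[of v u w] by auto
      then show False
        using cherry[of a b c d] cherry[of b a c d] cherry[of c d a b] cherry[of d c a b]
          assms(2-4) missing_sym u by blast
    qed
  qed
qed

text \<open>
  Pairwise intersecting missing edges that do not all pass through one vertex form a triangle;
  the clique bound provides a missing edge avoiding any given vertex.\<close>
lemma nonedge_vertices_triangle:
  assumes deg: "card (nbhd v) = r + 1"
    and no_disjoint: "\<And>a b c d. missing v a b \<Longrightarrow> missing v c d \<Longrightarrow> {a, b} \<inter> {c, d} \<noteq> {}"
  obtains a b c where "missing v a b" "missing v b c" "missing v a c"
    "nonedge_vertices v = {a, b, c}"
proof -
  have avoiding: "\<exists>s t. missing v s t \<and> s \<noteq> p \<and> t \<noteq> p" for p
  proof -
    have "r \<le> card (nbhd v - {p})"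
      using deg finite_nbhd by (simp add: card_Diff_singleton_if)
    then show ?thesis
      using missing_if_large[of "nbhd v - {p}" v] by blast
  qed
  have other: "\<exists>t. missing v q t \<and> t \<noteq> p" if "missing v p q" for p q
  proof -
    obtain s t where "missing v s t" "s \<noteq> p" "t \<noteq> p"
      using avoiding by blast
    with no_disjoint[OF that this(1)] show ?thesis
      using missing_sym by blast
  qed
  obtain p q where pq: "missing v p q"
    using avoiding by blast
  obtain t where qt: "missing v q t" "t \<noteq> p"
    using other[OF pq] by blast
  obtain s where ps: "missing v p s" "s \<noteq> q"
    using other[OF missing_sym[OF pq]] by blast
  have "s = t"
    using no_disjoint[OF ps(1) qt(1)] pq qt(2) ps(2) unfolding missing_def by auto
  with ps have pt: "missing v p t" by simp
  have "nonedge_vertices v \<subseteq> {p, q, t}"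
  proof
    fix u assume "u \<in> nonedge_vertices v"
    then obtain w where uw: "missing v u w"
      unfolding nonedge_vertices_def by blast
    show "u \<in> {p, q, t}"
      using no_disjoint[OF uw pq] no_disjoint[OF uw qt(1)] no_disjoint[OF uw pt] pq qt
      unfolding missing_def by auto
  qed
  moreover have "{p, q, t} \<subseteq> nonedge_vertices v"
    using pq qt(1) missing_sym[OF pt] unfolding nonedge_vertices_def by blast
  ultimately show ?thesis
    using that[OF pq qt(1) pt] by blast
qed

lemma heavy_nonedge_vertices_cases:
  assumes "heavy v"
  obtains (two_disjoint) a b c d where "missing v a b" "missing v c d" "{a, b} \<inter> {c, d} = {}"
      "nonedge_vertices v = {a, b, c, d}"
    | (triangle) a b c where "missing v a b" "missing v b c" "missing v a c"
      "nonedge_vertices v = {a, b, c}"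
proof (cases "\<exists>a b c d. missing v a b \<and> missing v c d \<and> {a, b} \<inter> {c, d} = {}")
  case True
  then obtain a b c d where abcd: "missing v a b" "missing v c d" "{a, b} \<inter> {c, d} = {}"
    by blast
  show ?thesis
    by (rule two_disjoint[OF abcd nonedge_vertices_eq_if_disjoint_missing[OF assms abcd]])
next
  case False
  then have "{a, b} \<inter> {c, d} \<noteq> {}" if "missing v a b" "missing v c d" for a b c d
    using that by blast
  from nonedge_vertices_triangle[OF heavy_card_nbhd[OF assms] this] triangle
  show ?thesis by blast
qed

definition block :: "nat \<Rightarrow> nat set" where
  "block v = insert v (nbhd v - nonedge_vertices v)"

lemma nonedge_vertices_subset_nbhd: "nonedge_vertices v \<subseteq> nbhd v"
  unfolding nonedge_vertices_def missing_def by auto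

lemma adj_if_not_nonedge_vertex:
  "s \<in> nbhd v \<Longrightarrow> s \<notin> nonedge_vertices v \<Longrightarrow> t \<in> nbhd v \<Longrightarrow> t \<noteq> s \<Longrightarrow> adj s t"
  unfolding nonedge_vertices_def missing_def by blast

lemma finite_block: "finite (block v)"
  unfolding block_def using finite_nbhd by simp

lemma block_inter_nonedge_vertices: "block v \<inter> nonedge_vertices v = {}"
  unfolding block_def using not_in_nbhd nonedge_vertices_subset_nbhd by blast

lemma block_subset_nbhd:
  assumes "u \<in> nonedge_vertices v"
  shows "block v \<subseteq> nbhd u"
proof
  fix y assume y: "y \<in> block v"
  have u: "u \<in> nbhd v"
    using assms nonedge_vertices_subset_nbhd by blast
  show "y \<in> nbhd u"
  proof (cases "y = v")
    case True
    then show ?thesis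
      using u in_nbhd_iff adj_sym by simp
  next
    case False
    then have "y \<in> nbhd v" "y \<notin> nonedge_vertices v" "u \<noteq> y"
      using y assms unfolding block_def by auto
    then show ?thesis
      using adj_if_not_nonedge_vertex u in_nbhd_iff by blast
  qed
qed

lemma card_nonedge_vertices:
  assumes "heavy v"
  shows "card (nonedge_vertices v) \<in> {3, 4}"
  using assms by (cases rule: heavy_nonedge_vertices_cases) (auto simp: missing_def)

lemma card_block:
  assumes "heavy v"
  shows "card (block v) + card (nonedge_vertices v) = r + 2"
proof -
  have "card (nbhd v - nonedge_vertices v) = card (nbhd v) - card (nonedge_vertices v)"
    using finite_nbhd nonedge_vertices_subset_nbhd by (intro card_Diff_subset) (auto intro: finite_subset)
  moreover have "card (nonedge_vertices v) \<le> card (nbhd v)"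
    using finite_nbhd nonedge_vertices_subset_nbhd by (rule card_mono)
  ultimately show ?thesis
    unfolding block_def using heavy_card_nbhd[OF assms] not_in_nbhd finite_nbhd by simp
qed

lemma nbhd_block_vertex:
  assumes "heavy v" "w \<in> block v"
  shows "nbhd w = insert v (nbhd v) - {w}"
proof (cases "w = v")
  case True
  then show ?thesis
    using not_in_nbhd by auto
next
  case False
  then have w: "w \<in> nbhd v" "w \<notin> nonedge_vertices v"
    using assms(2) unfolding block_def by auto
  have "insert v (nbhd v) - {w} \<subseteq> nbhd w"
    using adj_if_not_nonedge_vertex[OF w] w(1) in_nbhd_iff adj_sym by auto
  moreover have "card (insert v (nbhd v) - {w}) = r + 1"
    using heavy_card_nbhd[OF assms(1)] w(1) not_in_nbhd[of v] finite_nbhd by simp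
  ultimately show ?thesis
    using card_seteq[OF finite_nbhd] card_nbhd_le[of w] by metis
qed

lemma card_nbhd_block_vertex:
  assumes "heavy v" "w \<in> block v"
  shows "card (nbhd w) = r + 1"
  using nbhd_block_vertex[OF assms] assms heavy_card_nbhd[OF assms(1)] not_in_nbhd[of v] finite_nbhd
  unfolding block_def by (auto simp: card_Diff_singleton_if)

lemma missing_block_vertex:
  assumes "heavy v" "w \<in> block v"
  shows "missing w p q \<longleftrightarrow> missing v p q"
proof -
  have Nw: "nbhd w = insert v (nbhd v) - {w}"
    using nbhd_block_vertex[OF assms] .
  have "missing w p q \<Longrightarrow> p \<noteq> v \<and> q \<noteq> v"
    using in_nbhd_iff adj_sym unfolding missing_def Nw by auto
  moreover have "missing v p q \<Longrightarrow> p \<noteq> w \<and> q \<noteq> w"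
    using assms(2) block_inter_nonedge_vertices missing_sym unfolding nonedge_vertices_def by blast
  ultimately show ?thesis
    unfolding missing_def Nw using not_in_nbhd by auto
qed

lemma nonedge_vertices_block_vertex:
  "heavy v \<Longrightarrow> w \<in> block v \<Longrightarrow> nonedge_vertices w = nonedge_vertices v"
  unfolding nonedge_vertices_def using missing_block_vertex by auto

lemma not_adj_block:
  assumes "heavy v" "x \<notin> insert v (nbhd v)" "y \<in> block v"
  shows "\<not> adj x y"
  using nbhd_block_vertex[OF assms(1,3)] assms(2) in_nbhd_iff by auto

lemma receiver_has_claw:
  assumes heavy: "heavy v" and u: "u \<in> nonedge_vertices v" and deg: "card (nbhd u) = r + 1"
  obtains z y1 y2 y3 where "missing u z y1" "missing u z y2" "missing u z y3"
    "y1 \<noteq> y2" "y1 \<noteq> y3" "y2 \<noteq> y3" "z \<notin> insert v (nbhd v)"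
    "y1 \<in> block v" "y2 \<in> block v" "y3 \<in> block v"
proof -
  obtain y where y: "missing v u y"
    using u unfolding nonedge_vertices_def by blast
  have "\<not> nbhd u \<subseteq> insert v (nbhd v)"
  proof
    assume "nbhd u \<subseteq> insert v (nbhd v)"
    then have "nbhd u \<subseteq> insert v (nbhd v) - {u, y}"
      using y not_in_nbhd[of u] in_nbhd_iff adj_sym unfolding missing_def by blast
    then have "card (nbhd u) \<le> card (insert v (nbhd v) - {u, y})"
      using finite_nbhd by (intro card_mono) auto
    also have "\<dots> = r"
      using y heavy_card_nbhd[OF heavy] not_in_nbhd[of v] finite_nbhd
      unfolding missing_def by (simp add: card_Diff_subset)
    finally show False
      using deg by simp
  qed
  then obtain z where z: "z \<in> nbhd u" "z \<notin> insert v (nbhd v)"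
    by blast
  have "3 \<le> card (block v)"
    using card_block[OF heavy] card_nonedge_vertices[OF heavy] r_ge_5 by auto
  then obtain y1 y2 y3 where ys: "y1 \<in> block v" "y2 \<in> block v" "y3 \<in> block v"
    "y1 \<noteq> y2" "y2 \<noteq> y3" "y1 \<noteq> y3"
    by (rule three_distinct_elements)
  have "missing u z y" if "y \<in> block v" for y
    using that z block_subset_nbhd[OF u] not_adj_block[OF heavy z(2)]
    unfolding missing_def block_def by auto
  with ys z(2) show ?thesis
    using that by blast
qed

lemma cliques_at_receiver:
  assumes heavy: "heavy v" and u: "u \<in> nonedge_vertices v"
  shows "cliques_at u \<le> 2 * r - 2"
    and "missing u p q \<Longrightarrow> p \<in> nonedge_vertices v \<Longrightarrow> q \<in> nonedge_vertices v \<Longrightarrow>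
      cliques_at u \<le> 2 * r - 3"
proof -
  have "cliques_at u \<le> 2 * r - 2 \<and>
    (missing u p q \<longrightarrow> p \<in> nonedge_vertices v \<longrightarrow> q \<in> nonedge_vertices v \<longrightarrow>
      cliques_at u \<le> 2 * r - 3)"
  proof (cases "card (nbhd u) = r + 1")
    case True
    obtain z y1 y2 y3 where claw: "missing u z y1" "missing u z y2" "missing u z y3"
      "y1 \<noteq> y2" "y1 \<noteq> y3" "y2 \<noteq> y3" and z: "z \<notin> insert v (nbhd v)"
      and ys: "y1 \<in> block v" "y2 \<in> block v" "y3 \<in> block v"
      by (rule receiver_has_claw[OF heavy u True])
    have "cliques_at u \<le> 2 * r - 3"
      if pq: "missing u p q" "p \<in> nonedge_vertices v" "q \<in> nonedge_vertices v"
    proof (rule cliques_at_le_claw_and_pair(2)[OF True claw pq(1)])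
      show "p \<noteq> z" "q \<noteq> z"
        using z pq(2,3) nonedge_vertices_subset_nbhd by auto
      show "{p, q} \<inter> {y1, y2, y3} = {}"
        using ys pq(2,3) block_inter_nonedge_vertices by auto
    qed
    then show ?thesis
      using cliques_at_le_if_claw[OF True claw] by blast
  next
    case False
    then have "cliques_at u \<le> 2 * r - 3"
      using card_nbhd_le[of u] by (intro cliques_at_le_if_card_nbhd_le) simp
    then show ?thesis
      by simp
  qed
  then show "cliques_at u \<le> 2 * r - 2"
    and "missing u p q \<Longrightarrow> p \<in> nonedge_vertices v \<Longrightarrow> q \<in> nonedge_vertices v \<Longrightarrow>
      cliques_at u \<le> 2 * r - 3"
    by blast+
qed

lemma heavy_not_receiver: "heavy v \<Longrightarrow> u \<in> nonedge_vertices v \<Longrightarrow> \<not> heavy u"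
  using cliques_at_receiver(1) not_heavy_if_cliques_at_le by fastforce

text \<open>
  Otherwise the receiver u would be adjacent to block v, to w, and to all but at most three
  vertices of nbhd w; these sets are disjoint and together exceed the degree bound r + 1.\<close>
lemma heavy_sender_in_block:
  assumes v: "heavy v" "u \<in> nonedge_vertices v" and w: "heavy w" "u \<in> nonedge_vertices w"
  shows "w \<in> block v"
proof (rule ccontr)
  assume "w \<notin> block v"
  moreover have "w \<notin> nonedge_vertices v"
    using heavy_not_receiver[OF v(1)] w(1) by blast
  ultimately have w_out: "w \<notin> insert v (nbhd v)"
    unfolding block_def by blast
  let ?A = "nbhd w - insert u {y. missing w u y}"
  have uw: "u \<in> nbhd w"
    using w(2) nonedge_vertices_subset_nbhd by blast
  have fin: "finite {y. missing w u y}"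
    using finite_nbhd[of w] by (rule finite_subset[rotated]) (auto simp: missing_def)
  have "card (nbhd w) - card (insert u {y. missing w u y}) \<le> card ?A"
    using fin by (intro diff_card_le_card_Diff) simp
  moreover have "card (insert u {y. missing w u y}) \<le> 3"
    using heavy_card_missing_le_2[OF w(1), of u] fin by (simp add: card_insert_if)
  ultimately have A: "r - 2 \<le> card ?A"
    using heavy_card_nbhd[OF w(1)] by linarith
  have "?A \<subseteq> nbhd u"
    using uw in_nbhd_iff adj_sym unfolding missing_def by auto
  moreover have "block v \<subseteq> nbhd u" "w \<in> nbhd u"
    using block_subset_nbhd[OF v(2)] uw in_nbhd_iff adj_sym by auto
  ultimately have "card (block v \<union> ?A \<union> {w}) \<le> r + 1"
    using card_mono[OF finite_nbhd, of "block v \<union> ?A \<union> {w}" u] card_nbhd_le[of u] by auto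
  moreover have "block v \<inter> ?A = {}"
    using not_adj_block[OF v(1) w_out] in_nbhd_iff adj_sym by auto
  moreover have "w \<notin> block v \<union> ?A"
    using \<open>w \<notin> block v\<close> not_in_nbhd by blast
  ultimately have "card (block v) + card ?A + 1 \<le> r + 1"
    using finite_block finite_nbhd by (simp add: card_Un_disjoint)
  moreover have "r - 2 \<le> card (block v)"
    using card_block[OF v(1)] card_nonedge_vertices[OF v(1)] by auto
  ultimately show False
    using A r_ge_5 by linarith
qed

lemma cliques_at_block_vertex_le_transversals:
  assumes "heavy v" "w \<in> block v" "\<And>p q. (p, q) \<in> P \<Longrightarrow> missing v p q"
  shows "cliques_at w \<le> card (transversals (nbhd w) 3 P)"
  using assms card_nbhd_block_vertex missing_block_vertex by (intro cliques_at_le_transversals_3) auto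

lemma cliques_at_block_vertex_path:
  assumes "heavy v" "w \<in> block v" "missing v a b" "missing v b c" "missing v c d"
    "a \<noteq> c" "a \<noteq> d" "b \<noteq> d"
  shows "cliques_at w \<le> 3 * r - 5"
proof -
  have "cliques_at w \<le> card (transversals (nbhd w) 3 {(a, b), (b, c), (c, d)})"
    using assms by (intro cliques_at_block_vertex_le_transversals) auto
  also have "\<dots> \<le> 3 * card (nbhd w) - 8"
    using assms missing_block_vertex[OF assms(1,2)] unfolding missing_def
    by (intro card_transversals_path finite_nbhd) auto
  finally show ?thesis
    using card_nbhd_block_vertex[OF assms(1,2)] by simp
qed

lemma cliques_at_block_vertex_triangle:
  assumes "heavy v" "w \<in> block v" "missing v a b" "missing v b c" "missing v a c"
  shows "cliques_at w \<le> 3 * r - 5"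
proof -
  have "cliques_at w \<le> card (transversals (nbhd w) 3 {(a, b), (b, c), (a, c)})"
    using assms by (intro cliques_at_block_vertex_le_transversals) auto
  also have "\<dots> \<le> 3 * card (nbhd w) - 8"
    using assms missing_block_vertex[OF assms(1,2)] unfolding missing_def
    by (intro card_transversals_triangle finite_nbhd) auto
  finally show ?thesis
    using card_nbhd_block_vertex[OF assms(1,2)] by simp
qed

lemma cliques_at_block_vertex_two_disjoint:
  assumes heavy: "heavy v" and w: "w \<in> block v"
    and ab: "missing v a b" and cd: "missing v c d" and disjoint: "{a, b} \<inter> {c, d} = {}"
  shows "cliques_at w \<le> 4 * r - 8"
    and "\<not> (adj a c \<and> adj a d \<and> adj b c \<and> adj b d) \<Longrightarrow> cliques_at w \<le> 3 * r - 5"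
proof -
  have "cliques_at w \<le> card (transversals (nbhd w) 3 {(a, b), (c, d)})"
    using assms by (intro cliques_at_block_vertex_le_transversals) auto
  also have "\<dots> = 4 * card (nbhd w) - 12"
    using assms missing_block_vertex[OF heavy w] unfolding missing_def
    by (intro card_transversals_two_disjoint_pairs finite_nbhd) auto
  finally show "cliques_at w \<le> 4 * r - 8"
    using card_nbhd_block_vertex[OF heavy w] by simp
  assume "\<not> (adj a c \<and> adj a d \<and> adj b c \<and> adj b d)"
  then consider "missing v a c" | "missing v a d" | "missing v b c" | "missing v b d"
    using ab cd disjoint unfolding missing_def by auto
  then show "cliques_at w \<le> 3 * r - 5"
  proof cases
    case 1
    then show ?thesis
      using cliques_at_block_vertex_path[OF heavy w missing_sym[OF ab] 1 cd] disjoint by auto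
  next
    case 2
    then show ?thesis
      using cliques_at_block_vertex_path[OF heavy w missing_sym[OF ab] 2 missing_sym[OF cd]]
        disjoint by auto
  next
    case 3
    then show ?thesis
      using cliques_at_block_vertex_path[OF heavy w ab 3 cd] disjoint by auto
  next
    case 4
    then show ?thesis
      using cliques_at_block_vertex_path[OF heavy w ab 4 missing_sym[OF cd]] disjoint by auto
  qed
qed

lemma cliques_at_receiver_two_disjoint:
  assumes heavy: "heavy v" and u: "u \<in> nonedge_vertices v"
    and ab: "missing v a b" and cd: "missing v c d" and NV: "nonedge_vertices v = {a, b, c, d}"
    and cross: "adj a c" "adj a d" "adj b c" "adj b d"
  shows "cliques_at u \<le> 2 * r - 3"
proof -
  have "u \<in> {a, b} \<Longrightarrow> missing u c d" "u \<in> {c, d} \<Longrightarrow> missing u a b"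
    using cross ab cd in_nbhd_iff adj_sym unfolding missing_def by auto
  then show ?thesis
    using cliques_at_receiver(2)[OF heavy u] u NV by auto
qed

text \<open>
  Each block vertex w sends (cliques_at w - target) / m to each of the m vertices of
  nonedge_vertices v. As card (block v) + m = r + 2 and (r + 2) target = 4 (r - 1)^2, the
  inequality below says that the receiver u collects at most target - cliques_at u.\<close>
lemma block_charge_bound:
  assumes heavy: "heavy v" and u: "u \<in> nonedge_vertices v"
  shows "\<exists>K. (\<forall>w\<in>block v. cliques_at w \<le> K) \<and>
    card (block v) * K + card (nonedge_vertices v) * cliques_at u \<le> 4 * (r - 1)\<^sup>2"
  using heavy
proof (cases rule: heavy_nonedge_vertices_cases)
  case (two_disjoint a b c d)
  then have m: "card (nonedge_vertices v) = 4" and B: "card (block v) = r - 2"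
    using card_block[OF heavy] unfolding missing_def by auto
  note block = cliques_at_block_vertex_two_disjoint[OF heavy _ two_disjoint(1-3)]
  show ?thesis
  proof (cases "adj a c \<and> adj a d \<and> adj b c \<and> adj b d")
    case True
    have "(r - 2) * (4 * r - 8) + 4 * (2 * r - 3) \<le> 4 * (r - 1)\<^sup>2"
      using r_ge_5 by (induction r rule: nat_induct_at_least) (simp_all add: power2_eq_square algebra_simps)
    then show ?thesis
      using m B block(1) True cliques_at_receiver_two_disjoint[OF heavy u two_disjoint(1,2,4)]
      by (intro exI[of _ "4 * r - 8"]) (auto intro: le_trans[OF add_left_mono])
  next
    case False
    have "(r - 2) * (3 * r - 5) + 4 * (2 * r - 2) \<le> 4 * (r - 1)\<^sup>2"
      using r_ge_5 by (induction r rule: nat_induct_at_least) (simp_all add: power2_eq_square algebra_simps)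
    then show ?thesis
      using m B block(2) False cliques_at_receiver(1)[OF heavy u]
      by (intro exI[of _ "3 * r - 5"]) (auto intro: le_trans[OF add_mono])
  qed
next
  case (triangle a b c)
  then have m: "card (nonedge_vertices v) = 3" and B: "card (block v) = r - 1"
    using card_block[OF heavy] unfolding missing_def by auto
  have "(r - 1) * (3 * r - 5) + 3 * (2 * r - 2) \<le> 4 * (r - 1)\<^sup>2"
    using r_ge_5 by (induction r rule: nat_induct_at_least) (simp_all add: power2_eq_square algebra_simps)
  then show ?thesis
    using m B cliques_at_block_vertex_triangle[OF heavy _ triangle(1-3)] cliques_at_receiver(1)[OF heavy u]
    by (intro exI[of _ "3 * r - 5"]) (auto intro: le_trans[OF add_mono])
qed

lemma block_share_le:
  assumes heavy: "heavy v"
    and charge: "card (block v) * K + card (nonedge_vertices v) * L \<le> 4 * (r - 1)\<^sup>2"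
  shows "card (block v) * ((K - target) / card (nonedge_vertices v)) \<le> target - L"
proof -
  have m: "0 < real (card (nonedge_vertices v))"
    using card_nonedge_vertices[OF heavy] by auto
  have "real (4 * (r - 1)\<^sup>2) = (card (block v) + card (nonedge_vertices v)) * target"
    using card_block[OF heavy] r_ge_5 unfolding target_def by (simp add: of_nat_diff add.commute)
  moreover have "real (card (block v) * K + card (nonedge_vertices v) * L) \<le> real (4 * (r - 1)\<^sup>2)"
    using charge by (simp only: of_nat_le_iff)
  ultimately have "card (block v) * (K - target) \<le> card (nonedge_vertices v) * (target - L)"
    by (simp add: algebra_simps)
  then show ?thesis
    using m by (simp add: field_simps)
qed

lemma receiver_charge:
  assumes "\<not> heavy u"
  shows "real (cliques_at u)
    + (\<Sum>v\<in>{v\<in>V. heavy v \<and> u \<in> nonedge_vertices v}.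
        (real (cliques_at v) - target) / card (nonedge_vertices v)) \<le> target"
proof (cases "\<exists>v. heavy v \<and> u \<in> nonedge_vertices v")
  case False
  then have no_senders: "{v\<in>V. heavy v \<and> u \<in> nonedge_vertices v} = {}"
    by blast
  show ?thesis
    unfolding no_senders using assms unfolding heavy_def by simp
next
  case True
  then obtain v where v: "heavy v" "u \<in> nonedge_vertices v"
    by blast
  let ?S = "{w\<in>V. heavy w \<and> u \<in> nonedge_vertices w}"
  let ?m = "real (card (nonedge_vertices v))"
  obtain K where K: "\<forall>w\<in>block v. cliques_at w \<le> K"
    and charge: "card (block v) * K + card (nonedge_vertices v) * cliques_at u \<le> 4 * (r - 1)\<^sup>2"
    using block_charge_bound[OF v] by blast
  have S: "?S \<subseteq> block v"
    using heavy_sender_in_block[OF v] by blast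
  have m: "0 < ?m"
    using card_nonedge_vertices[OF v(1)] by auto
  have "target < K"
    using K v(1) unfolding heavy_def block_def by fastforce
  have "(\<Sum>w\<in>?S. (real (cliques_at w) - target) / card (nonedge_vertices w))
      = (\<Sum>w\<in>?S. (real (cliques_at w) - target) / ?m)"
    using S nonedge_vertices_block_vertex[OF v(1)] by (intro sum.cong) auto
  also have "\<dots> \<le> (\<Sum>w\<in>?S. (real K - target) / ?m)"
    using S K m by (intro sum_mono divide_right_mono) auto
  also have "\<dots> \<le> (\<Sum>w\<in>block v. (real K - target) / ?m)"
    using \<open>target < K\<close> m by (intro sum_mono2[OF finite_block S]) auto
  also have "\<dots> \<le> target - real (cliques_at u)"
    using block_share_le[OF v(1) charge] by simp
  finally show ?thesis
    by simp
qed

lemma sum_cliques_at_le: "(\<Sum>v\<in>V. real (cliques_at v)) \<le> target * card V"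
proof (rule discharging[where H = heavy and R = nonedge_vertices])
  show "nonedge_vertices v \<subseteq> V \<and> nonedge_vertices v \<noteq> {}" if "heavy v" for v
    using card_nonedge_vertices[OF that] nonedge_vertices_subset_nbhd nbhd_subset_V by fastforce
qed (use finite_V heavy_not_receiver receiver_charge in auto)

lemma k_count_le: "real (r - 1) * k_count (r - 1) G \<le> target * card V"
proof -
  let ?F = "{S. is_clique G S \<and> card S = r - 1}"
  have "(\<Sum>v\<in>V. card {Q\<in>?F. v \<in> Q}) = (r - 1) * card ?F"
    by (intro sum_card_members finite_V) (auto simp: is_clique_def)
  then have "(\<Sum>v\<in>V. cliques_at v) = (r - 1) * k_count (r - 1) G"
    unfolding cliques_at_def k_count_def by (simp add: conj_assoc)
  then show ?thesis
    using sum_cliques_at_le by (metis of_nat_mult of_nat_sum)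
qed

end

lemma rho_le_if_in_graph_class:
  assumes "G \<in> graph_class (r + 1) r" "5 \<le> r" "0 < card (fst G)"
  shows "rho (r - 1) G \<le> (4 * real r - 4) / (real r + 2)"
proof -
  interpret extremal_graph G r
    using assms by unfold_locales
  have r: "real (r - 1) = real r - 1" "0 < real r - 1"
    using assms(2) by auto
  have "(real r - 1) * k_count (r - 1) G
      \<le> (real r - 1) * ((4 * real r - 4) / (real r + 2) * card (fst G))"
    using k_count_le unfolding target_def r(1) by (simp add: power2_eq_square field_simps)
  then have "k_count (r - 1) G \<le> (4 * real r - 4) / (real r + 2) * card (fst G)"
    using r(2) by (rule mult_left_le_imp_le)
  then show ?thesis
    using assms(3) unfolding rho_def by (simp add: divide_le_eq)
qed

section \<open>The Turan graph T(r + 2, r)\<close>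

lemma turan_graph_adj_iff:
  "{u, v} \<in> snd (turan_graph n r) \<longleftrightarrow> u < n \<and> v < n \<and> u mod r \<noteq> v mod r"
  unfolding turan_graph_def by (auto simp: doubleton_eq_iff)

lemma card_clique_turan_graph_le:
  assumes "0 < r" "is_clique (turan_graph n r) S"
  shows "card S \<le> r"
proof -
  have "inj_on (\<lambda>x. x mod r) S"
    using assms(2) turan_graph_adj_iff unfolding is_clique_def by (intro inj_onI) blast
  moreover have "(\<lambda>x. x mod r) ` S \<subseteq> {0..<r}"
    using assms(1) by auto
  ultimately show ?thesis
    using card_mono[of "{0..<r}" "(\<lambda>x. x mod r) ` S"] by (simp add: card_image)
qed

lemma turan_graph_in_graph_class:
  assumes "0 < r"
  shows "turan_graph n r \<in> graph_class (n - 1) r"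
proof -
  let ?T = "turan_graph n r"
  have V: "fst ?T = {0..<n}"
    unfolding turan_graph_def by simp
  have "simple_graph ?T"
    unfolding simple_graph_def turan_graph_def by (auto simp: card_insert_if)
  moreover have "max_degree ?T \<le> n - 1"
  proof -
    have "degree ?T v \<le> n - 1" if "v \<in> fst ?T" for v
    proof -
      have "{u \<in> fst ?T. {u, v} \<in> snd ?T} \<subseteq> {0..<n} - {v}"
        using V turan_graph_adj_iff by auto
      then have "degree ?T v \<le> card ({0..<n} - {v})"
        unfolding degree_def by (intro card_mono) auto
      then show ?thesis
        using that V by simp
    qed
    then show ?thesis
      unfolding max_degree_def using V by (subst Max_le_iff) auto
  qed
  moreover have "clique_number ?T \<le> r"
  proof -
    have "is_clique ?T {}"
      unfolding is_clique_def by simp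
    then show ?thesis
      unfolding clique_number_def using finite_cliques[of ?T "\<lambda>_. True"] V card_clique_turan_graph_le[OF assms]
      by (subst Max_le_iff) auto
  qed
  ultimately show ?thesis
    unfolding graph_class_def by simp
qed

lemma turan_graph_same_part:
  fixes r u v :: nat
  assumes "2 \<le> r" "u < r + 2" "v < r + 2" "u \<noteq> v" "u mod r = v mod r"
  shows "{u, v} = {0, r} \<or> {u, v} = {1, r + 1}"
proof -
  have "x mod r = (if x = r then 0 else if x = r + 1 then 1 else x)" if "x < r + 2" for x
    using that assms(1) by (auto simp: mod_Suc)
  then show ?thesis
    using assms by (auto split: if_splits)
qed

lemma is_clique_turan_graph_complement:
  assumes r: "2 \<le> r" and T: "T \<in> transversals {0..<r + 2} 3 {(0, r), (1, r + 1)}"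
  shows "is_clique (turan_graph (r + 2) r) ({0..<r + 2} - T)"
  unfolding is_clique_def
proof (intro conjI ballI impI)
  show "{0..<r + 2} - T \<subseteq> fst (turan_graph (r + 2) r)"
    unfolding turan_graph_def by auto
  fix u v assume uv: "u \<in> {0..<r + 2} - T" "v \<in> {0..<r + 2} - T" "u \<noteq> v"
  have "u mod r \<noteq> v mod r"
  proof
    assume "u mod r = v mod r"
    then have "{u, v} = {0, r} \<or> {u, v} = {1, r + 1}"
      using turan_graph_same_part[OF r] uv by simp
    moreover have "(0 \<in> T \<or> r \<in> T) \<and> (1 \<in> T \<or> r + 1 \<in> T)"
      using T unfolding transversals_def by simp
    ultimately show False
      using uv by (auto simp: doubleton_eq_iff)
  qed
  with uv show "{u, v} \<in> snd (turan_graph (r + 2) r)"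
    unfolding turan_graph_adj_iff by simp
qed

text \<open>
  The (r-1)-cliques of T(r+2, r) are the complements of the 3-sets meeting both parts of size
  two, which are counted exactly by the transversal count behind the upper bound.\<close>
lemma k_count_turan_graph:
  assumes "2 \<le> r"
  shows "4 * r - 4 \<le> k_count (r - 1) (turan_graph (r + 2) r)"
proof -
  let ?W = "{0..<r + 2}" and ?T = "turan_graph (r + 2) r"
  let ?X = "transversals ?W 3 {(0, r), (1, r + 1)}"
  have "4 * r - 4 = card ?X"
    using assms card_transversals_two_disjoint_pairs[of ?W 0 r 1 "r + 1"] by simp
  also have "\<dots> = card ((\<lambda>T. ?W - T) ` ?X)"
    by (rule card_image[symmetric], rule inj_onI) (auto simp: transversals_def)
  also have "\<dots> \<le> k_count (r - 1) ?T"
    unfolding k_count_def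
  proof (rule card_mono)
    show "finite {S. is_clique ?T S \<and> card S = r - 1}"
      by (rule finite_cliques) (simp add: turan_graph_def)
    show "(\<lambda>T. ?W - T) ` ?X \<subseteq> {S. is_clique ?T S \<and> card S = r - 1}"
    proof safe
      fix T assume T: "T \<in> ?X"
      then show "is_clique ?T (?W - T)"
        using assms by (rule is_clique_turan_graph_complement[rotated])
      from T have "T \<subseteq> ?W" "card T = 3"
        unfolding transversals_def by auto
      then show "card (?W - T) = r - 1"
        by (simp add: card_Diff_subset finite_subset)
    qed
  qed
  finally show ?thesis .
qed

theorem mainTheorem14:
  fixes r :: nat
  assumes "r \<ge> 5"
  shows "f_sup (r - 1) (r + 1) r = rho (r - 1) (turan_graph (r + 2) r)
     \<and> rho (r - 1) (turan_graph (r + 2) r) = (4 * real r - 4) / (real r + 2)"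
proof -
  let ?T = "turan_graph (r + 2) r" and ?c = "(4 * real r - 4) / (real r + 2)"
  have T: "?T \<in> graph_class (r + 1) r" "card (fst ?T) = r + 2"
    using turan_graph_in_graph_class[of r "r + 2"] assms unfolding turan_graph_def by auto
  have "?c \<le> rho (r - 1) ?T"
    using k_count_turan_graph[of r] assms unfolding rho_def T(2)
    by (simp add: divide_right_mono of_nat_diff add.commute)
  with rho_le_if_in_graph_class[OF T(1) assms] T(2) have rho_T: "rho (r - 1) ?T = ?c"
    by simp
  have "f_sup (r - 1) (r + 1) r = ?c"
    unfolding f_sup_def
  proof (rule cSup_eq_maximum)
    show "?c \<in> {rho (r - 1) G |G. G \<in> graph_class (r + 1) r \<and> 1 \<le> card (fst G)}"
      using T rho_T by (intro CollectI exI[of _ ?T]) simp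
    show "x \<le> ?c" if "x \<in> {rho (r - 1) G |G. G \<in> graph_class (r + 1) r \<and> 1 \<le> card (fst G)}" for x
      using that rho_le_if_in_graph_class[OF _ assms] by fastforce
  qed
  with rho_T show ?thesis
    by simp
qed

end
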